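(* Let $\varepsilon\in\{1,-1\}$ and $n\ge2$. Then $$\sum_{\gamma\in\Delta^<_n}\varepsilon^{\ell_B(\gamma)}q^{\mathrm{fmaj}(\gamma)}=\varepsilon^nq\,[2]_{\varepsilon q}[4]_{q}[6]_{\varepsilon q}\cdots[2n-2]_{\varepsilon^{n-1}q}\,[n-1]_{\varepsilon^nq}=\varepsilon^nq\left(\frac{1-q}{1-\varepsilon q}\right)^{\lceil n/2\rceil}[2]_q[4]_q\cdots[2n-2]_q[n-1]_q,$$ where the $i$-th factor of the first product is $[2i]_{\varepsilon^iq}$.
   Context: $B_n$ is the set of words $\gamma=\gamma_1\cdots\gamma_n$ with $\gamma_i\in\{\pm1,\dots,\pm n\}$ and $|\gamma_1|\cdots|\gamma_n|$ a permutation of $[n]$; $\Delta^<_n=\{\gamma\in B_n:0<\gamma_n<n\}$. $\mathrm{inv}$ in usual order, $\ell_B(\gamma)=\mathrm{inv}(\gamma)-\sum_{i:\gamma_i<0}\gamma_i$. Order $\prec$: $-1\prec-2\prec\cdots\prec-N\prec1\prec\cdots\prec N$; $\mathrm{maj}_\prec(w)=\sum_{i:w_i\succ w_{i+1}}i$; $\mathrm{fmaj}(w)=2\mathrm{maj}_\prec(w)+\mathrm{neg}(w)$ with $\mathrm{neg}(w)$ the number of negative letters. For an indeterminate $x$, $[m]_x=(1-x^m)/(1-x)=1+x+\dots+x^{m-1}$. *)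

theory Defs
  imports Complex_Main
begin

text \<open>Signed permutations as words (lists) \<gamma>_1 ... \<gamma>_n of nonzero integers whose
  absolute values form a permutation of [n]; list index i corresponds to position i+1.\<close>
definition signed_perms :: "nat \<Rightarrow> int list set" where
  "signed_perms n = {w. length w = n \<and> distinct (map abs w) \<and> set (map abs w) = {1..int n}}"

definition Delta_lt :: "nat \<Rightarrow> int list set" where
  "Delta_lt n = {w \<in> signed_perms n. 0 < last w \<and> last w < int n}"

definition inv :: "int list \<Rightarrow> nat" where
  "inv w = card {(i, j). i < j \<and> j < length w \<and> w ! i > w ! j}"

definition neg :: "int list \<Rightarrow> nat" where
  "neg w = length (filter (\<lambda>a. a < 0) w)"

definition lengthB :: "int list \<Rightarrow> nat" where
  "lengthB w = nat (int (inv w) - sum_list (filter (\<lambda>a. a < 0) w))"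

text \<open>the order -1 < -2 < ... < -N < 1 < ... < N\<close>
definition prec :: "int \<Rightarrow> int \<Rightarrow> bool" where
  "prec a b \<longleftrightarrow> (a < 0 \<and> b > 0) \<or> (a < 0 \<and> b < 0 \<and> \<bar>a\<bar> < \<bar>b\<bar>) \<or> (a > 0 \<and> b > 0 \<and> a < b)"

definition maj_prec :: "int list \<Rightarrow> nat" where
  "maj_prec w = (\<Sum>i \<in> {i. Suc i < length w \<and> prec (w ! Suc i) (w ! i)}. Suc i)"

definition fmaj :: "int list \<Rightarrow> nat" where
  "fmaj w = 2 * maj_prec w + neg w"

definition qint :: "nat \<Rightarrow> 'a::comm_ring_1 \<Rightarrow> 'a" where
  "qint m x = (\<Sum>k<m. x ^ k)"

end

theory Submission
  imports Defs "HOL-Library.Product_Lexorder"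
begin

text \<open>Remove the last letter. For a finite alphabet \<open>A\<close> of positive integers let \<open>G\<^sub>A(c)\<close> be
  the generating function of the signed words over \<open>\<plusminus>A\<close> ending in \<open>c\<close>, with \<open>\<ell>\<^sub>B\<close> taken
  after standardizing \<open>A\<close> to \<open>[|A|]\<close>. Appending \<open>c\<close> to a word ending in \<open>c'\<close> raises
  \<open>fmaj\<close> by \<open>2(|A| - 1)\<close> exactly when \<open>c \<prec> c'\<close>, plus \<open>1\<close> when \<open>c < 0\<close>, and raises \<open>\<ell>\<^sub>B\<close> by an
  amount depending only on \<open>A\<close> and \<open>c\<close>. By induction on \<open>|A|\<close>, summing over \<open>c'\<close> along \<open>\<prec>\<close>
  produces a \<open>q\<close>-integer \<open>[2|A| - 2]\<close> in the twisted variable \<open>\<epsilon>\<^bsup>|A|-1\<^esup>q\<close>, and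
  \<open>G\<^sub>A(c) = (\<epsilon>\<^bsup>|A|\<^esup>q)\<^bsup>r\<^esup> \<Prod>\<^sub>i\<^sub><\<^sub>|\<^sub>A\<^sub>| [2i]\<^bsub>\<epsilon>\<^sup>iq\<^esub>\<close> where \<open>r\<close> counts the letters of \<open>\<plusminus>A\<close> above \<open>c\<close>.
  For \<open>A = [n]\<close> and \<open>c = 1, \<dots>, n - 1\<close> one has \<open>r = n - c\<close>, and the sum over \<open>c\<close> is the
  geometric factor \<open>\<epsilon>\<^sup>nq [n - 1]\<^bsub>\<epsilon>\<^sup>nq\<^esub>\<close>. The second form follows from
  \<open>[m]\<^bsub>-q\<^esub> = (1 - q)/(1 + q) [m]\<^sub>q\<close> for even \<open>m\<close>.\<close>

section \<open>Appending a letter\<close>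

lemma inv_snoc: "inv (w @ [c]) = inv w + length (filter (\<lambda>a. c < a) w)"
proof -
  let ?old = "{(i, j). i < j \<and> j < length w \<and> w ! i > w ! j}"
  let ?new = "(\<lambda>i. (i, length w)) ` {i. i < length w \<and> c < w ! i}"
  have "{(i, j). i < j \<and> j < length (w @ [c]) \<and> (w @ [c]) ! i > (w @ [c]) ! j} = ?old \<union> ?new"
    by (auto simp: nth_append less_Suc_eq split: if_splits)
  moreover have "finite ?old"
    by (rule finite_subset[of _ "{..<length w} \<times> {..<length w}"]) auto
  moreover have "?old \<inter> ?new = {}"
    by auto
  moreover have "card ?new = card {i. i < length w \<and> c < w ! i}"
    by (rule card_image) (auto simp: inj_on_def)
  ultimately show ?thesis
    unfolding inv_def by (simp add: card_Un_disjoint length_filter_conv_card)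
qed

lemma maj_prec_snoc:
  "maj_prec (w @ [c]) = maj_prec w + (if w \<noteq> [] \<and> prec c (last w) then length w else 0)"
proof (cases "w = []")
  case True
  then show ?thesis by (simp add: maj_prec_def)
next
  case False
  let ?D = "{i. Suc i < length w \<and> prec (w ! Suc i) (w ! i)}"
  have "i \<in> {i. Suc i < length (w @ [c]) \<and> prec ((w @ [c]) ! Suc i) ((w @ [c]) ! i)}
      \<longleftrightarrow> i \<in> ?D \<union> (if prec c (last w) then {length w - 1} else {})" for i
  proof (cases "Suc i < length w")
    case True
    then show ?thesis by (auto simp: nth_append)
  next
    case outside: False
    show ?thesis
    proof (cases "i = length w - 1")
      case True
      then show ?thesis using False outside by (auto simp: nth_append last_conv_nth)
    next
      case False
      then show ?thesis using outside by auto
    qed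
  qed
  then have "{i. Suc i < length (w @ [c]) \<and> prec ((w @ [c]) ! Suc i) ((w @ [c]) ! i)}
      = ?D \<union> (if prec c (last w) then {length w - 1} else {})"
    by blast
  moreover have "finite ?D"
    by (rule finite_subset[of _ "{..<length w}"]) auto
  moreover have "length w - 1 \<notin> ?D"
    by auto
  ultimately show ?thesis
    using False unfolding maj_prec_def by simp
qed

lemma fmaj_snoc:
  "fmaj (w @ [c]) = fmaj w + (if w \<noteq> [] \<and> prec c (last w) then 2 * length w else 0) + of_bool (c < 0)"
  by (simp add: fmaj_def maj_prec_snoc neg_def)

definition signed_letters :: "int set \<Rightarrow> int set" where
  "signed_letters A = A \<union> uminus ` A"

definition signed_words :: "int set \<Rightarrow> int list set" where
  "signed_words A = {w. distinct (map abs w) \<and> set (map abs w) = A}"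

lemma finite_signed_letters: "finite A \<Longrightarrow> finite (signed_letters A)"
  by (simp add: signed_letters_def)

lemma signed_lettersD: "A \<subseteq> {0<..} \<Longrightarrow> c \<in> signed_letters A \<Longrightarrow> \<bar>c\<bar> \<in> A \<and> c \<noteq> 0"
  unfolding signed_letters_def by auto

lemma abs_in_signed_letters: "\<bar>c\<bar> \<in> A \<Longrightarrow> c \<in> signed_letters A"
  unfolding signed_letters_def by (metis Un_iff abs_if image_eqI minus_minus)

lemma zero_notin_signed_letters: "A \<subseteq> {0<..} \<Longrightarrow> 0 \<notin> signed_letters A"
  by (auto simp: signed_letters_def)

lemma pos_Int_uminus_image:
  fixes A B :: "int set"
  assumes "A \<subseteq> {0<..}" "B \<subseteq> A"
  shows "A \<inter> uminus ` B = {}"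
proof -
  have False if "x \<in> A" "b \<in> B" "x = -b" for x b
    using assms that by (smt (verit) greaterThan_iff subsetD)
  then show ?thesis
    by blast
qed

lemma card_signed_letters:
  assumes "finite A" "A \<subseteq> {0<..}"
  shows "card (signed_letters A) = 2 * card A"
proof -
  have "card (uminus ` A) = card A"
    by (rule card_image) (simp add: inj_on_def)
  then show ?thesis
    using assms pos_Int_uminus_image[OF assms(2) order_refl]
    by (simp add: signed_letters_def card_Un_disjoint)
qed

lemma signed_letters_Diff_abs:
  "A \<subseteq> {0<..} \<Longrightarrow> c \<in> signed_letters A \<Longrightarrow> signed_letters (A - {\<bar>c\<bar>}) = signed_letters A - {c, -c}"
  unfolding signed_letters_def by (auto simp: abs_if)

lemma length_signed_word: "w \<in> signed_words A \<Longrightarrow> length w = card A"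
  unfolding signed_words_def by (metis (mono_tags) distinct_card length_map mem_Collect_eq)

lemma signed_words_empty: "signed_words {} = {[]}"
  by (auto simp: signed_words_def)

lemma finite_signed_words:
  assumes "finite A"
  shows "finite (signed_words A)"
proof (rule finite_subset)
  show "signed_words A \<subseteq> {w. set w \<subseteq> signed_letters A \<and> length w = card A}"
  proof
    fix w assume w: "w \<in> signed_words A"
    then have "\<bar>x\<bar> \<in> A" if "x \<in> set w" for x
      using that unfolding signed_words_def by auto
    then have "set w \<subseteq> signed_letters A"
      using abs_in_signed_letters by blast
    then show "w \<in> {w. set w \<subseteq> signed_letters A \<and> length w = card A}"
      using length_signed_word[OF w] by simp
  qed
  show "finite {w. set w \<subseteq> signed_letters A \<and> length w = card A}"
    using assms by (intro finite_lists_length_eq finite_signed_letters)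
qed

lemma signed_words_snoc:
  assumes "A \<noteq> {}" "A \<subseteq> {0<..}"
  shows "signed_words A = (\<Union>c\<in>signed_letters A. (\<lambda>u. u @ [c]) ` signed_words (A - {\<bar>c\<bar>}))"
proof
  show "signed_words A \<subseteq> (\<Union>c\<in>signed_letters A. (\<lambda>u. u @ [c]) ` signed_words (A - {\<bar>c\<bar>}))"
  proof
    fix w assume w: "w \<in> signed_words A"
    then have "w \<noteq> []"
      using assms(1) by (auto simp: signed_words_def)
    then obtain u c where w_eq: "w = u @ [c]"
      by (metis rev_exhaust)
    then have "\<bar>c\<bar> \<in> A" "u \<in> signed_words (A - {\<bar>c\<bar>})"
      using w by (auto simp: signed_words_def) (metis imageI)
    then show "w \<in> (\<Union>c\<in>signed_letters A. (\<lambda>u. u @ [c]) ` signed_words (A - {\<bar>c\<bar>}))"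
      unfolding w_eq by (intro UN_I[of c] imageI abs_in_signed_letters)
  qed
next
  show "(\<Union>c\<in>signed_letters A. (\<lambda>u. u @ [c]) ` signed_words (A - {\<bar>c\<bar>})) \<subseteq> signed_words A"
  proof (rule UN_least, rule image_subsetI)
    fix c u assume c: "c \<in> signed_letters A" and "u \<in> signed_words (A - {\<bar>c\<bar>})"
    then show "u @ [c] \<in> signed_words A"
      using signed_lettersD[OF assms(2) c] by (auto simp: signed_words_def)
  qed
qed

lemma sum_signed_words_snoc:
  assumes "finite A" "A \<noteq> {}" "A \<subseteq> {0<..}"
  shows "sum f (signed_words A) = (\<Sum>c\<in>signed_letters A. \<Sum>u\<in>signed_words (A - {\<bar>c\<bar>}). f (u @ [c]))"
proof -
  have "sum f (signed_words A) = (\<Sum>c\<in>signed_letters A. sum f ((\<lambda>u. u @ [c]) ` signed_words (A - {\<bar>c\<bar>})))"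
    unfolding signed_words_snoc[OF assms(2,3)]
    by (rule sum.UNION_disjoint)
      (auto simp: finite_signed_letters finite_signed_words assms(1) simp del: append1_eq_conv)
  also have "\<dots> = (\<Sum>c\<in>signed_letters A. \<Sum>u\<in>signed_words (A - {\<bar>c\<bar>}). f (u @ [c]))"
    by (rule sum.cong[OF refl], subst sum.reindex) (simp_all add: inj_on_def)
  finally show ?thesis .
qed

section \<open>Type-B length relative to an alphabet\<close>

definition rank :: "int set \<Rightarrow> int \<Rightarrow> nat" where
  "rank A x = card {y\<in>A. y \<le> x}"

definition neg_rank :: "int set \<Rightarrow> int \<Rightarrow> nat" where
  "neg_rank A a = (if a < 0 then rank A (-a) else 0)"

text \<open>For \<open>A = [n]\<close> the rank of \<open>x\<close> is \<open>x\<close> itself and \<open>lengthB_on A\<close> is \<open>\<ell>\<^sub>B\<close>; for a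
  general alphabet it is \<open>\<ell>\<^sub>B\<close> of the word standardized to \<open>[card A]\<close>, which is what makes
  removing the last letter of a word possible.\<close>

definition lengthB_on :: "int set \<Rightarrow> int list \<Rightarrow> nat" where
  "lengthB_on A w = inv w + (\<Sum>a\<leftarrow>w. neg_rank A a)"

definition lengthB_increment :: "int set \<Rightarrow> int \<Rightarrow> nat" where
  "lengthB_increment A c = (if 0 < c then card {x\<in>A. c < x} else card A - 1 + rank A (-c))"

lemma rank_Diff:
  assumes "finite A" "x \<in> A" "x \<noteq> b"
  shows "rank A x = rank (A - {b}) x + of_bool (b \<in> A \<and> b < x)"
proof (cases "b \<in> A \<and> b < x")
  case True
  then have "{y\<in>A. y \<le> x} = insert b {y\<in>A - {b}. y \<le> x}"
    by auto
  then show ?thesis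
    using True assms by (simp add: rank_def)
next
  case False
  then have "{y\<in>A. y \<le> x} = {y\<in>A - {b}. y \<le> x}"
    using assms by auto
  then show ?thesis
    using False by (simp add: rank_def)
qed

lemma rank_interval:
  assumes "x \<in> {1..int n}"
  shows "rank {1..int n} x = nat x"
proof -
  have "{y\<in>{1..int n}. y \<le> x} = {1..x}"
    using assms by auto
  then show ?thesis
    by (simp add: rank_def)
qed

lemma lengthB_eq_lengthB_on:
  assumes "w \<in> signed_words {1..int n}"
  shows "lengthB w = lengthB_on {1..int n} w"
proof -
  have "rank {1..int n} (-a) = nat (-a)" if "a \<in> set w" "a < 0" for a
    using assms that by (intro rank_interval) (force simp: signed_words_def)
  then have "int (\<Sum>a\<leftarrow>w. neg_rank {1..int n} a) = - sum_list (filter (\<lambda>a. a < 0) w)"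
    by (induction w) (auto simp: neg_rank_def)
  then show ?thesis
    unfolding lengthB_def lengthB_on_def by linarith
qed

lemma sum_list_of_bool: "(\<Sum>a\<leftarrow>xs. of_bool (P a) :: nat) = length (filter P xs)"
  by (induction xs) auto

lemma neg_rank_Diff_abs:
  assumes "finite A" "\<bar>c\<bar> \<in> A" "\<bar>a\<bar> \<in> A - {\<bar>c\<bar>}"
  shows "of_bool (c < a) + neg_rank A a
       = neg_rank (A - {\<bar>c\<bar>}) a + (if 0 < c then of_bool (c < \<bar>a\<bar>) else 1)"
proof (cases "a < 0")
  case True
  then have "rank A (-a) = rank (A - {\<bar>c\<bar>}) (-a) + of_bool (\<bar>c\<bar> < -a)"
    using rank_Diff[OF assms(1), of "-a" "\<bar>c\<bar>"] assms(2,3) by simp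
  then show ?thesis
    using True assms(3) by (cases "0 < c") (auto simp: neg_rank_def)
next
  case False
  then show ?thesis
    using assms(3) by (auto simp: neg_rank_def)
qed

lemma lengthB_on_snoc:
  assumes A: "finite A" "A \<subseteq> {0<..}" and c: "c \<in> signed_letters A"
    and w: "w \<in> signed_words (A - {\<bar>c\<bar>})"
  shows "lengthB_on A (w @ [c]) = lengthB_on (A - {\<bar>c\<bar>}) w + lengthB_increment A c"
proof -
  let ?A' = "A - {\<bar>c\<bar>}"
  have cA: "\<bar>c\<bar> \<in> A" "c \<noteq> 0"
    using signed_lettersD[OF A(2) c] by auto
  have dw: "distinct (map abs w)" and sw: "abs ` set w = ?A'"
    using w by (auto simp: signed_words_def)
  have "length (filter (\<lambda>a. c < a) w) + (\<Sum>a\<leftarrow>w. neg_rank A a)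
      = (\<Sum>a\<leftarrow>w. of_bool (c < a) + neg_rank A a)"
    by (simp add: sum_list_addf sum_list_of_bool)
  also have "\<dots> = (\<Sum>a\<leftarrow>w. neg_rank ?A' a + (if 0 < c then of_bool (c < \<bar>a\<bar>) else 1))"
    using sw by (intro arg_cong[where f=sum_list] map_cong refl neg_rank_Diff_abs[OF A(1) cA(1)]) auto
  also have "\<dots> = (\<Sum>a\<leftarrow>w. neg_rank ?A' a) + (if 0 < c then card {x\<in>A. c < x} else card A - 1)"
  proof (cases "0 < c")
    case True
    have "length (filter (\<lambda>x. c < x) (map abs w)) = card ({x. c < x} \<inter> ?A')"
      using distinct_length_filter[OF dw] sw by simp
    also have "{x. c < x} \<inter> ?A' = {x\<in>A. c < x}"
      using True by auto
    finally show ?thesis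
      using True by (simp add: sum_list_addf sum_list_of_bool filter_map comp_def)
  next
    case False
    have "length w = card A - 1"
      using length_signed_word[OF w] A(1) cA by simp
    then show ?thesis
      using False by (simp add: sum_list_Suc)
  qed
  finally have "length (filter (\<lambda>a. c < a) w) + (\<Sum>a\<leftarrow>w. neg_rank A a)
      = (\<Sum>a\<leftarrow>w. neg_rank ?A' a) + (if 0 < c then card {x\<in>A. c < x} else card A - 1)" .
  then show ?thesis
    using cA by (auto simp: lengthB_on_def inv_snoc lengthB_increment_def neg_rank_def)
qed

section \<open>Counting along the order \<open>\<prec>\<close>\<close>

definition prec_key :: "int \<Rightarrow> bool \<times> int" where
  "prec_key a = (0 < a, \<bar>a\<bar>)"

lemma prec_iff_prec_key: "a \<noteq> 0 \<Longrightarrow> b \<noteq> 0 \<Longrightarrow> prec a b \<longleftrightarrow> prec_key a < prec_key b"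
  by (auto simp: prec_def prec_key_def less_prod_def)

lemma inj_on_prec_key: "inj_on prec_key {a. a \<noteq> 0}"
  by (auto simp: inj_on_def prec_key_def abs_if split: if_splits)

lemma bij_betw_card_above:
  fixes key :: "'a \<Rightarrow> 'b::linorder"
  assumes "finite T" "inj_on key T"
  shows "bij_betw (\<lambda>y. card {z\<in>T. key y < key z}) T {..<card T}"
proof -
  let ?above = "\<lambda>y. card {z\<in>T. key y < key z}"
  have smaller: "?above y' < ?above y" if "y' \<in> T" "key y < key y'" for y y'
    by (rule psubset_card_mono) (use assms(1) that in auto)
  have inj: "inj_on ?above T"
  proof (rule inj_onI)
    fix y y' assume y: "y \<in> T" "y' \<in> T" and eq: "?above y = ?above y'"
    have "key y = key y'"
      using smaller[of y' y] smaller[of y y'] y eq by (metis less_irrefl linorder_neqE)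
    then show "y = y'"
      using inj_onD[OF assms(2)] y by blast
  qed
  have "?above y < card T" if "y \<in> T" for y
    by (rule psubset_card_mono) (use assms(1) that in auto)
  then have "?above ` T = {..<card T}"
    using card_image[OF inj] by (intro card_subset_eq) auto
  then show ?thesis
    using inj by (simp add: bij_betw_def)
qed

lemma sum_card_above:
  fixes key :: "'a \<Rightarrow> 'b::linorder"
  assumes "finite T" "inj_on key T"
  shows "(\<Sum>y\<in>T. g (card {z\<in>T. key y < key z})) = (\<Sum>j<card T. g j)"
  using sum.reindex_bij_betw[OF bij_betw_card_above[OF assms]] .

lemma sum_card_above_split:
  fixes key :: "'a \<Rightarrow> 'b::linorder"
  assumes S: "finite S" "c \<notin> S" and inj: "inj_on key (insert c S)"
  defines "t \<equiv> card {y\<in>S. key c < key y}"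
  shows "(\<Sum>y\<in>S. f (key c < key y) (card {z\<in>S. key y < key z}))
       = (\<Sum>j<t. f True j) + (\<Sum>j<card S - t. f False (t + j))"
proof -
  let ?hi = "{y\<in>S. key c < key y}" and ?lo = "{y\<in>S. key y < key c}"
  have "key y \<noteq> key c" if "y \<in> S" for y
    using inj S(2) that by (metis inj_on_contraD insertCI)
  then have S_eq: "S = ?hi \<union> ?lo"
    by (auto simp: neq_iff)
  have fin: "finite ?hi" "finite ?lo"
    using S(1) by auto
  have inj': "inj_on key ?hi" "inj_on key ?lo"
    by (rule inj_on_subset[OF inj], blast)+
  have "?hi \<inter> ?lo = {}"
    by auto
  then have "card S = t + card ?lo"
    unfolding t_def using card_Un_disjoint[OF fin] by (simp add: S_eq[symmetric])
  then have card_lo: "card ?lo = card S - t"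
    by simp
  have "(\<Sum>y\<in>S. f (key c < key y) (card {z\<in>S. key y < key z}))
      = (\<Sum>y\<in>?hi. f (key c < key y) (card {z\<in>S. key y < key z}))
        + (\<Sum>y\<in>?lo. f (key c < key y) (card {z\<in>S. key y < key z}))"
    by (subst S_eq, rule sum.union_disjoint) (use fin in auto)
  also have "(\<Sum>y\<in>?hi. f (key c < key y) (card {z\<in>S. key y < key z}))
      = (\<Sum>y\<in>?hi. f True (card {z\<in>?hi. key y < key z}))"
    by (intro sum.cong refl arg_cong2[where f=f] arg_cong[where f=card]) auto
  also have "\<dots> = (\<Sum>j<t. f True j)"
    unfolding t_def by (rule sum_card_above[OF fin(1) inj'(1)])
  also have "(\<Sum>y\<in>?lo. f (key c < key y) (card {z\<in>S. key y < key z}))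
      = (\<Sum>y\<in>?lo. f False (t + card {z\<in>?lo. key y < key z}))"
  proof (intro sum.cong refl)
    fix y assume y: "y \<in> ?lo"
    then have "{z\<in>S. key y < key z} = ?hi \<union> {z\<in>?lo. key y < key z}"
      by (subst (1) S_eq) auto
    moreover have "card (?hi \<union> {z\<in>?lo. key y < key z}) = t + card {z\<in>?lo. key y < key z}"
      unfolding t_def by (rule card_Un_disjoint) (use S(1) in auto)
    ultimately have "card {z\<in>S. key y < key z} = t + card {z\<in>?lo. key y < key z}"
      by simp
    then show "f (key c < key y) (card {z\<in>S. key y < key z}) = f False (t + card {z\<in>?lo. key y < key z})"
      using y by (metis (mono_tags, lifting) less_not_sym mem_Collect_eq)
  qed
  also have "\<dots> = (\<Sum>j<card S - t. f False (t + j))"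
    unfolding card_lo[symmetric] by (rule sum_card_above[OF fin(2) inj'(2)])
  finally show ?thesis .
qed

section \<open>\<open>q\<close>-integers\<close>

lemma qint_add: "qint (a + b) x = qint a x + x ^ a * qint b x"
  by (induction b) (simp_all add: qint_def algebra_simps power_add)

lemma power_eq_power_if_even_add:
  fixes e :: "'a::monoid_mult"
  assumes "e ^ 2 = 1" "even (m + n)"
  shows "e ^ m = e ^ n"
proof -
  have even_power: "e ^ (2 * k) = 1" for k
    using assms(1) by (simp add: power_mult)
  obtain k where "m + n = 2 * k"
    using assms(2) by blast
  then have "e ^ m = e ^ (m + n) * e ^ n"
    by (metis even_power power_add mult_2 mult_1 mult_1_right mult.assoc)
  then show ?thesis
    using \<open>m + n = 2 * k\<close> even_power by simp
qed

text \<open>The twist \<open>x = e\<^sup>M q\<close> is what makes \<open>x\<^sup>2\<^sup>M = q\<^sup>2\<^sup>M\<close>.\<close>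

lemma qint_split_twisted:
  fixes e q :: "'a::comm_ring_1"
  assumes e: "e ^ 2 = 1" and t: "t \<le> 2 * M"
  defines "x \<equiv> e ^ M * q"
  shows "q ^ (2 * M) * qint t x + x ^ t * qint (2 * M - t) x
       = e ^ t * (e ^ Suc M * q) ^ t * qint (2 * M) x"
proof -
  have even_power: "e ^ (2 * k) = 1" for k
    using e by (simp add: power_mult)
  have "e ^ t * e ^ t = 1"
    using even_power[of t] by (simp add: power_add[symmetric] mult_2)
  moreover have "(e ^ Suc M * q) ^ t = e ^ t * x ^ t"
    by (simp add: x_def power_mult_distrib mult_ac)
  ultimately have xt: "e ^ t * (e ^ Suc M * q) ^ t = x ^ t"
    by (simp add: mult.assoc[symmetric])
  have "x ^ t * x ^ (2 * M - t) = x ^ (2 * M)"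
    using t by (simp add: power_add[symmetric])
  also have "\<dots> = e ^ (2 * (M * M)) * q ^ (2 * M)"
    by (simp add: x_def power_mult_distrib power_mult[symmetric] mult_ac)
  finally have x2M: "x ^ t * x ^ (2 * M - t) = q ^ (2 * M)"
    by (simp add: even_power)
  have "qint (2 * M) x = qint (2 * M - t) x + x ^ (2 * M - t) * qint t x"
    using qint_add[of "2 * M - t" t x] t by simp
  then show ?thesis
    unfolding xt by (simp add: distrib_left x2M mult.assoc[symmetric])
qed

lemma sum_prec_qint:
  fixes Q x :: "'a::comm_ring_1"
  assumes S: "finite S" "0 \<notin> S" "c \<noteq> 0" "c \<notin> S"
  defines "t \<equiv> card {y\<in>S. prec c y}"
  shows "(\<Sum>y\<in>S. (if prec c y then Q else 1) * x ^ card {z\<in>S. prec y z})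
       = Q * qint t x + x ^ t * qint (card S - t) x"
proof -
  have key: "prec a b \<longleftrightarrow> prec_key a < prec_key b" if "a \<in> insert c S" "b \<in> insert c S" for a b
  proof -
    have "a \<noteq> 0" "b \<noteq> 0"
      using that S(2,3) by auto
    then show ?thesis
      by (rule prec_iff_prec_key)
  qed
  have inj: "inj_on prec_key (insert c S)"
    by (rule inj_on_subset[OF inj_on_prec_key]) (use S(2,3) in auto)
  have t_key: "t = card {y\<in>S. prec_key c < prec_key y}"
    unfolding t_def using key by (metis (no_types, lifting) insertCI)
  have "(\<Sum>y\<in>S. (if prec c y then Q else 1) * x ^ card {z\<in>S. prec y z})
      = (\<Sum>y\<in>S. (\<lambda>b j. (if b then Q else 1) * x ^ j) (prec_key c < prec_key y)
                   (card {z\<in>S. prec_key y < prec_key z}))"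
  proof (intro sum.cong refl)
    fix y assume "y \<in> S"
    then have "{z\<in>S. prec y z} = {z\<in>S. prec_key y < prec_key z}" "prec c y \<longleftrightarrow> prec_key c < prec_key y"
      using key by auto
    then show "(if prec c y then Q else 1) * x ^ card {z\<in>S. prec y z}
        = (\<lambda>b j. (if b then Q else 1) * x ^ j) (prec_key c < prec_key y) (card {z\<in>S. prec_key y < prec_key z})"
      by simp
  qed
  also have "\<dots> = (\<Sum>j<t. Q * x ^ j) + (\<Sum>j<card S - t. x ^ (t + j))"
    unfolding t_key by (subst sum_card_above_split[OF S(1,4) inj]) simp
  also have "\<dots> = Q * qint t x + x ^ t * qint (card S - t) x"
    by (simp add: qint_def sum_distrib_left power_add)
  finally show ?thesis .
qed

section \<open>Words with a prescribed last letter\<close>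

definition last_letter_gf :: "'a::comm_ring_1 \<Rightarrow> 'a \<Rightarrow> int set \<Rightarrow> int \<Rightarrow> 'a" where
  "last_letter_gf e q A c =
     (\<Sum>w\<in>signed_words (A - {\<bar>c\<bar>}). e ^ lengthB_on A (w @ [c]) * q ^ fmaj (w @ [c]))"

definition prec_above :: "int set \<Rightarrow> int \<Rightarrow> nat" where
  "prec_above A c = card {y\<in>signed_letters A. prec c y}"

lemma last_letter_gf_singleton:
  assumes "0 < a" "c \<in> signed_letters {a}"
  shows "last_letter_gf e q {a} c = (e * q) ^ prec_above {a} c"
proof -
  have c: "c = a \<or> c = -a"
    using assms(2) by (auto simp: signed_letters_def)
  have "inv [c] = 0" "fmaj [c] = of_bool (c < 0)"
    using inv_snoc[of "[]" c] fmaj_snoc[of "[]" c]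
    by (simp_all add: inv_def fmaj_def maj_prec_def neg_def)
  moreover have "{y\<in>{a}. y \<le> a} = {a}"
    by auto
  moreover have "{y\<in>signed_letters {a}. prec c y} = (if c < 0 then {a} else {})"
    using c assms(1) by (auto simp: signed_letters_def prec_def)
  ultimately show ?thesis
    using c assms(1)
    by (auto simp: last_letter_gf_def signed_words_empty lengthB_on_def neg_rank_def rank_def prec_above_def)
qed

lemma last_letter_gf_snoc:
  assumes A: "finite A" "A \<subseteq> {0<..}" and c: "c \<in> signed_letters A" and ne: "A - {\<bar>c\<bar>} \<noteq> {}"
  shows "last_letter_gf e q A c = e ^ lengthB_increment A c * q ^ of_bool (c < 0) *
    (\<Sum>c'\<in>signed_letters (A - {\<bar>c\<bar>}).
       (if prec c c' then q ^ (2 * card (A - {\<bar>c\<bar>})) else 1) * last_letter_gf e q (A - {\<bar>c\<bar>}) c')"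
proof -
  let ?A' = "A - {\<bar>c\<bar>}"
  let ?factor = "\<lambda>c'. e ^ lengthB_increment A c * q ^ of_bool (c < 0)
    * (if prec c c' then q ^ (2 * card ?A') else 1)"
  have A': "finite ?A'" "?A' \<subseteq> {0<..}"
    using A by auto
  have "last_letter_gf e q A c = (\<Sum>c'\<in>signed_letters ?A'. \<Sum>u\<in>signed_words (?A' - {\<bar>c'\<bar>}).
      e ^ lengthB_on A ((u @ [c']) @ [c]) * q ^ fmaj ((u @ [c']) @ [c]))"
    unfolding last_letter_gf_def by (subst sum_signed_words_snoc[OF A'(1) ne A'(2)]) simp
  also have "\<dots> = (\<Sum>c'\<in>signed_letters ?A'. \<Sum>u\<in>signed_words (?A' - {\<bar>c'\<bar>}).
      ?factor c' * (e ^ lengthB_on ?A' (u @ [c']) * q ^ fmaj (u @ [c'])))"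
  proof (intro sum.cong refl)
    fix c' u assume "c' \<in> signed_letters ?A'" "u \<in> signed_words (?A' - {\<bar>c'\<bar>})"
    then have uc': "u @ [c'] \<in> signed_words ?A'"
      using signed_words_snoc[OF ne A'(2)] by blast
    have "lengthB_on A ((u @ [c']) @ [c]) = lengthB_on ?A' (u @ [c']) + lengthB_increment A c"
      by (rule lengthB_on_snoc[OF A c uc'])
    moreover have "fmaj ((u @ [c']) @ [c])
        = fmaj (u @ [c']) + (if prec c c' then 2 * card ?A' else 0) + of_bool (c < 0)"
      using fmaj_snoc[of "u @ [c']" c] length_signed_word[OF uc'] by simp
    ultimately show "e ^ lengthB_on A ((u @ [c']) @ [c]) * q ^ fmaj ((u @ [c']) @ [c])
        = ?factor c' * (e ^ lengthB_on ?A' (u @ [c']) * q ^ fmaj (u @ [c']))"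
      by (simp add: power_add mult_ac)
  qed
  also have "\<dots> = (\<Sum>c'\<in>signed_letters ?A'. ?factor c' * last_letter_gf e q ?A' c')"
    unfolding last_letter_gf_def by (simp only: sum_distrib_left)
  finally show ?thesis
    by (simp only: sum_distrib_left mult.assoc)
qed

lemma prec_above_Diff_abs:
  assumes "finite A" "A \<subseteq> {0<..}" "c \<in> signed_letters A"
  shows "prec_above A c = card {y\<in>signed_letters (A - {\<bar>c\<bar>}). prec c y} + of_bool (c < 0)"
proof -
  have c: "c \<noteq> 0" "-c \<in> signed_letters A"
    using assms(2,3) by (auto simp: signed_letters_def image_iff)
  have "{y\<in>signed_letters A. prec c y}
      = {y\<in>signed_letters A - {c, -c}. prec c y} \<union> {y\<in>{c, -c}. prec c y}"
    using c assms(3) by auto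
  moreover have "{y\<in>{c, -c}. prec c y} = (if c < 0 then {-c} else {})"
    using c by (auto simp: prec_def)
  ultimately have "{y\<in>signed_letters A. prec c y}
      = {y\<in>signed_letters (A - {\<bar>c\<bar>}). prec c y} \<union> (if c < 0 then {-c} else {})"
    using signed_letters_Diff_abs[OF assms(2,3)] by simp
  moreover have "finite {y\<in>signed_letters (A - {\<bar>c\<bar>}). prec c y}"
    using assms(1) by (simp add: finite_signed_letters)
  ultimately show ?thesis
    unfolding prec_above_def using signed_letters_Diff_abs[OF assms(2,3)]
    by (cases "c < 0") (auto simp: card_insert_if)
qed

text \<open>The parity of the change in length is what lets the signs \<open>e\<^sup>\<ell>\<close> be absorbed into the
  twisted variable \<open>e\<^sup>|\<^sup>A\<^sup>| q\<close>.\<close>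

lemma even_lengthB_increment:
  assumes A: "finite A" "A \<subseteq> {0<..}" and c: "c \<in> signed_letters A"
  shows "even (lengthB_increment A c + card {y\<in>signed_letters (A - {\<bar>c\<bar>}). prec c y}
               + (if c < 0 then card A else 0))"
proof (cases "0 < c")
  case True
  then have "{y\<in>signed_letters (A - {\<bar>c\<bar>}). prec c y} = {x\<in>A. c < x}"
    using A(2) by (auto simp: signed_letters_def prec_def)
  then show ?thesis
    using True by (simp add: lengthB_increment_def)
next
  case False
  define a where "a = -c"
  have a: "a \<in> A" "0 < a" "c = -a"
    using signed_lettersD[OF A(2) c] False by (auto simp: a_def)
  have "{y\<in>signed_letters (A - {\<bar>c\<bar>}). prec c y} = (A - {a}) \<union> uminus ` {x\<in>A. a < x}"
    using A(2) a by (auto simp: signed_letters_def prec_def)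
  moreover have "(A - {a}) \<inter> uminus ` {x\<in>A. a < x} = {}"
    using pos_Int_uminus_image[OF A(2), of "{x\<in>A. a < x}"] by auto
  moreover have "card (uminus ` {x\<in>A. a < x}) = card {x\<in>A. a < x}"
    by (rule card_image) (simp add: inj_on_def)
  ultimately have t: "card {y\<in>signed_letters (A - {\<bar>c\<bar>}). prec c y} = card A - 1 + card {x\<in>A. a < x}"
    using A(1) a by (simp add: card_Un_disjoint)
  have "A = {x\<in>A. a < x} \<union> {y\<in>A. y \<le> a}"
    by auto
  then have "card A = card {x\<in>A. a < x} + rank A a"
    unfolding rank_def using A(1) by (metis (no_types, lifting) card_Un_disjoint disjoint_iff
        finite_Un mem_Collect_eq not_less)
  moreover have "card A \<ge> 1"
    using A(1) a by (auto simp: Suc_le_eq card_gt_0_iff)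
  ultimately have "lengthB_increment A c + card {y\<in>signed_letters (A - {\<bar>c\<bar>}). prec c y} + card A
      = 2 * (2 * card A - 1)"
    using a t by (simp add: lengthB_increment_def)
  then show ?thesis
    using a(2,3) by simp
qed

lemma sum_prec_above_twisted:
  fixes e q :: "'a::comm_ring_1"
  assumes e: "e ^ 2 = 1" and A: "finite A" "A \<subseteq> {0<..}" and c: "c \<noteq> 0" "c \<notin> signed_letters A"
  defines "t \<equiv> card {y\<in>signed_letters A. prec c y}"
  shows "(\<Sum>c'\<in>signed_letters A. (if prec c c' then q ^ (2 * card A) else 1) * (e ^ card A * q) ^ prec_above A c')
       = e ^ t * (e ^ Suc (card A) * q) ^ t * qint (2 * card A) (e ^ card A * q)"
proof -
  have S: "finite (signed_letters A)" "0 \<notin> signed_letters A" "card (signed_letters A) = 2 * card A"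
    using finite_signed_letters[OF A(1)] zero_notin_signed_letters[OF A(2)] card_signed_letters[OF A]
    by auto
  have "t \<le> 2 * card A"
    unfolding t_def S(3)[symmetric] by (rule card_mono[OF S(1)]) auto
  then show ?thesis
    using sum_prec_qint[OF S(1,2) c, of "q ^ (2 * card A)" "e ^ card A * q"]
      qint_split_twisted[OF e, of t "card A" q]
    by (simp add: prec_above_def t_def S(3))
qed

lemma last_letter_gf_Suc:
  fixes e q :: "'a::comm_ring_1"
  assumes e: "e ^ 2 = 1"
    and A: "finite A" "A \<subseteq> {0<..}" "card A = Suc (Suc k)" and c: "c \<in> signed_letters A"
    and IH: "\<And>c'. c' \<in> signed_letters (A - {\<bar>c\<bar>}) \<Longrightarrow> last_letter_gf e q (A - {\<bar>c\<bar>}) c'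
               = (e ^ Suc k * q) ^ prec_above (A - {\<bar>c\<bar>}) c' * (\<Prod>i=1..k. qint (2*i) (e ^ i * q))"
  shows "last_letter_gf e q A c
       = (e ^ Suc (Suc k) * q) ^ prec_above A c * (\<Prod>i=1..Suc k. qint (2*i) (e ^ i * q))"
proof -
  define A' where "A' = A - {\<bar>c\<bar>}"
  define M where "M = Suc k"
  define P where "P = (\<Prod>i=1..k. qint (2*i) (e ^ i * q))"
  define t where "t = card {y\<in>signed_letters A'. prec c y}"
  define b where "b = (of_bool (c < 0) :: nat)"
  have cA: "\<bar>c\<bar> \<in> A" "c \<noteq> 0"
    using signed_lettersD[OF A(2) c] by auto
  have A': "finite A'" "A' \<subseteq> {0<..}" "card A' = M" "c \<notin> signed_letters A'"
    using A cA signed_letters_Diff_abs[OF A(2) c] by (auto simp: A'_def M_def)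
  then have "A' \<noteq> {}"
    by (auto simp: M_def)
  have "last_letter_gf e q A c = e ^ lengthB_increment A c * q ^ b *
      (\<Sum>c'\<in>signed_letters A'. (if prec c c' then q ^ (2 * M) else 1) * last_letter_gf e q A' c')"
    using last_letter_gf_snoc[OF A(1,2) c \<open>A' \<noteq> {}\<close>[unfolded A'_def]]
    unfolding A'_def[symmetric] A'(3) b_def .
  also have "(\<Sum>c'\<in>signed_letters A'. (if prec c c' then q ^ (2 * M) else 1) * last_letter_gf e q A' c')
      = (\<Sum>c'\<in>signed_letters A'. (if prec c c' then q ^ (2 * M) else 1) * (e ^ M * q) ^ prec_above A' c') * P"
    unfolding sum_distrib_right
    by (intro sum.cong refl) (simp add: IH[folded A'_def] M_def P_def mult.assoc)
  also have "(\<Sum>c'\<in>signed_letters A'. (if prec c c' then q ^ (2 * M) else 1) * (e ^ M * q) ^ prec_above A' c')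
      = e ^ t * (e ^ Suc M * q) ^ t * qint (2 * M) (e ^ M * q)"
    using sum_prec_above_twisted[OF e A'(1,2) cA(2) A'(4)] unfolding A'(3) t_def .
  finally have "last_letter_gf e q A c
      = e ^ (lengthB_increment A c + t) * q ^ b * (e ^ Suc M * q) ^ t * (P * qint (2 * M) (e ^ M * q))"
    by (simp add: power_add mult_ac)
  also have "e ^ (lengthB_increment A c + t) = e ^ (Suc M * b)"
    using even_lengthB_increment[OF A(1,2) c] A(3)
    by (intro power_eq_power_if_even_add[OF e]) (simp add: A'_def t_def b_def M_def)
  also have "e ^ (Suc M * b) * q ^ b * (e ^ Suc M * q) ^ t = (e ^ Suc M * q) ^ (t + b)"
    by (simp add: power_add power_mult power_mult_distrib mult_ac)
  also have "t + b = prec_above A c"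
    using prec_above_Diff_abs[OF A(1,2) c] by (simp add: t_def A'_def b_def)
  also have "P * qint (2 * M) (e ^ M * q) = (\<Prod>i=1..Suc k. qint (2*i) (e ^ i * q))"
    by (simp add: P_def M_def prod.nat_ivl_Suc' mult.commute)
  finally show ?thesis
    by (simp add: M_def)
qed

lemma last_letter_gf_eq:
  fixes e q :: "'a::comm_ring_1"
  assumes e: "e ^ 2 = 1"
  shows "finite A \<Longrightarrow> A \<subseteq> {0<..} \<Longrightarrow> card A = Suc k \<Longrightarrow> c \<in> signed_letters A \<Longrightarrow>
    last_letter_gf e q A c = (e ^ Suc k * q) ^ prec_above A c * (\<Prod>i=1..k. qint (2*i) (e ^ i * q))"
proof (induction k arbitrary: A c)
  case 0
  then obtain a where "A = {a}" "0 < a"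
    by (auto simp: card_Suc_eq)
  then show ?case
    using last_letter_gf_singleton "0.prems"(4) by simp
next
  case (Suc k)
  have "\<bar>c\<bar> \<in> A"
    using signed_lettersD[OF Suc.prems(2,4)] by simp
  then have A': "finite (A - {\<bar>c\<bar>})" "A - {\<bar>c\<bar>} \<subseteq> {0<..}" "card (A - {\<bar>c\<bar>}) = Suc k"
    using Suc.prems(1-3) by auto
  show ?case
    by (rule last_letter_gf_Suc[OF e Suc.prems], rule Suc.IH[OF A'])
qed

section \<open>Words ending in a small positive letter\<close>

lemma Delta_lt_eq:
  "Delta_lt n = {w\<in>signed_words {1..int n}. w \<noteq> [] \<and> 0 < last w \<and> last w < int n}"
proof -
  have "w \<in> signed_perms n \<longleftrightarrow> w \<in> signed_words {1..int n}" for w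
    using length_signed_word[of w "{1..int n}"] unfolding signed_perms_def signed_words_def by auto
  moreover have "w \<noteq> []" if "w \<in> signed_perms n" "0 < last w" "last w < int n" for w
    using that by (auto simp: signed_perms_def)
  ultimately show ?thesis
    unfolding Delta_lt_def by auto
qed

lemma prec_above_interval:
  assumes "0 < c" "c \<le> int n"
  shows "prec_above {1..int n} c = nat (int n - c)"
proof -
  have "{y\<in>signed_letters {1..int n}. prec c y} = {c+1..int n}"
    using assms unfolding signed_letters_def prec_def by auto
  then show ?thesis
    by (simp add: prec_above_def)
qed

lemma sum_power_interval: "(\<Sum>c\<in>{1..int m}. y ^ nat (int m + 1 - c)) = y * qint m y"
proof (induction m)
  case 0
  then show ?case by (simp add: qint_def)
next
  case (Suc m)
  have "{1..int (Suc m)} = insert (int m + 1) {1..int m}"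
    by auto
  then have "(\<Sum>c\<in>{1..int (Suc m)}. y ^ nat (int (Suc m) + 1 - c))
      = y + (\<Sum>c\<in>{1..int m}. y ^ nat (int (Suc m) + 1 - c))"
    by simp
  also have "(\<Sum>c\<in>{1..int m}. y ^ nat (int (Suc m) + 1 - c)) = y * (\<Sum>c\<in>{1..int m}. y ^ nat (int m + 1 - c))"
    unfolding sum_distrib_left
  proof (intro sum.cong refl)
    fix c assume "c \<in> {1..int m}"
    then have "nat (int (Suc m) + 1 - c) = Suc (nat (int m + 1 - c))"
      by auto
    then show "y ^ nat (int (Suc m) + 1 - c) = y * y ^ nat (int m + 1 - c)"
      by simp
  qed
  also have "y * (\<Sum>c\<in>{1..int m}. y ^ nat (int m + 1 - c)) = y * (y * qint m y)"
    by (simp only: Suc.IH)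
  also have "y + y * (y * qint m y) = y * qint (Suc m) y"
    unfolding qint_def sum.lessThan_Suc_shift by (simp add: sum_distrib_left distrib_left)
  finally show ?case .
qed

lemma sum_Delta_lt:
  fixes e q :: "'a::comm_ring_1"
  assumes e: "e ^ 2 = 1" and n: "n \<ge> 2"
  shows "(\<Sum>\<gamma>\<in>Delta_lt n. e ^ lengthB \<gamma> * q ^ fmaj \<gamma>)
       = e ^ n * q * (\<Prod>i=1..n-1. qint (2*i) (e ^ i * q)) * qint (n - 1) (e ^ n * q)"
proof -
  define N where "N = {1..int n}"
  define P where "P = (\<Prod>i=1..n-1. qint (2*i) (e ^ i * q))"
  define weight where "weight w = e ^ lengthB w * q ^ fmaj w" for w
  have N: "finite N" "N \<noteq> {}" "N \<subseteq> {0<..}" "card N = Suc (n - 1)"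
    using n by (auto simp: N_def)
  have "(\<Sum>\<gamma>\<in>Delta_lt n. weight \<gamma>)
      = (\<Sum>w\<in>signed_words N. if w \<noteq> [] \<and> 0 < last w \<and> last w < int n then weight w else 0)"
    unfolding Delta_lt_eq N_def by (rule sum.inter_filter) (simp add: finite_signed_words)
  also have "\<dots> = (\<Sum>c\<in>signed_letters N. if 0 < c \<and> c < int n then last_letter_gf e q N c else 0)"
  proof (subst sum_signed_words_snoc[OF N(1-3)], intro sum.cong refl)
    fix c assume "c \<in> signed_letters N"
    then have "lengthB (u @ [c]) = lengthB_on N (u @ [c])" if "u \<in> signed_words (N - {\<bar>c\<bar>})" for u
      using that signed_words_snoc[OF N(2,3)] lengthB_eq_lengthB_on unfolding N_def by blast
    then show "(\<Sum>u\<in>signed_words (N - {\<bar>c\<bar>}). if u @ [c] \<noteq> [] \<and> 0 < last (u @ [c]) \<and> last (u @ [c]) < int n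
          then weight (u @ [c]) else 0)
        = (if 0 < c \<and> c < int n then last_letter_gf e q N c else 0)"
      by (cases "0 < c \<and> c < int n") (simp_all add: last_letter_gf_def weight_def cong: conj_cong)
  qed
  also have "\<dots> = (\<Sum>c\<in>{1..int (n - 1)}. last_letter_gf e q N c)"
    using n by (subst sum.inter_filter[symmetric]) (auto simp: finite_signed_letters N intro!: sum.cong
        simp: signed_letters_def N_def)
  also have "\<dots> = (\<Sum>c\<in>{1..int (n - 1)}. (e ^ n * q) ^ nat (int (n - 1) + 1 - c) * P)"
  proof (intro sum.cong refl)
    fix c assume "c \<in> {1..int (n - 1)}"
    then have "c \<in> signed_letters N" "prec_above N c = nat (int (n - 1) + 1 - c)"
      using n prec_above_interval[of c n] by (auto simp: signed_letters_def N_def)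
    then show "last_letter_gf e q N c = (e ^ n * q) ^ nat (int (n - 1) + 1 - c) * P"
      using last_letter_gf_eq[OF e N(1,3,4)] n by (simp add: P_def)
  qed
  also have "\<dots> = (\<Sum>c\<in>{1..int (n - 1)}. (e ^ n * q) ^ nat (int (n - 1) + 1 - c)) * P"
    by (simp only: sum_distrib_right)
  also have "\<dots> = e ^ n * q * qint (n - 1) (e ^ n * q) * P"
    by (simp only: sum_power_interval)
  finally show ?thesis
    by (simp add: weight_def P_def mult_ac)
qed

lemma qint_uminus:
  fixes x :: "'a::field"
  assumes "x \<noteq> -1" "even m"
  shows "qint m (-x) = (1 - x) / (1 + x) * qint m x"
proof -
  have "(1 + x) * qint m (-x) = (1 - x) * qint m x"
    using one_diff_power_eq[of "-x" m] one_diff_power_eq[of x m] assms(2)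
    by (simp add: qint_def)
  moreover have "1 + x \<noteq> 0"
    using assms(1) by (metis add_eq_0_iff)
  ultimately show ?thesis
    by (simp add: field_simps)
qed

lemma qint_twisted:
  fixes e q :: "'a::field"
  assumes e: "e = 1 \<or> e = -1" and eq: "e * q \<noteq> 1" and m: "even m \<or> even i"
  shows "qint m (e ^ i * q) = ((1 - q) / (1 - e * q)) ^ of_bool (odd i) * qint m q"
proof (cases "e = 1 \<or> even i")
  case True
  then show ?thesis
    using e eq by auto
next
  case False
  then have "e = -1" "e ^ i = -1" "q \<noteq> -1"
    using e eq by auto
  then show ?thesis
    using qint_uminus[of q m] m False by simp
qed

lemma prod_qint_twisted:
  fixes e q :: "'a::field"
  assumes e: "e = 1 \<or> e = -1" and eq: "e * q \<noteq> 1"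
  shows "(\<Prod>i=1..m. qint (2*i) (e ^ i * q))
       = ((1 - q) / (1 - e * q)) ^ ((m + 1) div 2) * (\<Prod>i=1..m. qint (2*i) q)"
proof (induction m)
  case 0
  then show ?case by simp
next
  case (Suc m)
  have "(\<Prod>i=1..Suc m. qint (2*i) (e ^ i * q))
      = ((1 - q) / (1 - e * q)) ^ (of_bool (odd (Suc m)) + (m + 1) div 2)
        * (qint (2 * Suc m) q * (\<Prod>i=1..m. qint (2*i) q))"
    using qint_twisted[OF e eq, of "2 * Suc m" "Suc m"] Suc.IH
    by (simp add: atLeastAtMostSuc_conv power_add mult_ac)
  also have "of_bool (odd (Suc m)) + (m + 1) div 2 = (Suc m + 1) div 2"
    by simp
  finally show ?case
    by (simp add: atLeastAtMostSuc_conv)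
qed

lemma nat_ceiling_half: "nat \<lceil>real n / 2\<rceil> = (n + 1) div 2"
proof (cases "even n")
  case True
  then show ?thesis by auto
next
  case False
  then obtain k where k: "n = 2 * k + 1"
    using oddE by blast
  have "\<lceil>real n / 2\<rceil> = int k + 1"
    unfolding k by (rule ceiling_unique) auto
  then show ?thesis
    using k by simp
qed

lemma twisted_product_eq:
  fixes e q :: real
  assumes e: "e = 1 \<or> e = -1" and n: "n \<ge> 2" and eq: "e * q \<noteq> 1"
  shows "e ^ n * q * (\<Prod>i=1..n-1. qint (2*i) (e ^ i * q)) * qint (n - 1) (e ^ n * q)
       = e ^ n * q * ((1 - q) / (1 - e * q)) ^ nat \<lceil>real n / 2\<rceil>
         * (\<Prod>i=1..n-1. qint (2*i) q) * qint (n - 1) q"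
proof -
  have "(\<Prod>i=1..n-1. qint (2*i) (e ^ i * q)) = ((1 - q) / (1 - e * q)) ^ (n div 2) * (\<Prod>i=1..n-1. qint (2*i) q)"
    using prod_qint_twisted[OF e eq, of "n - 1"] n by simp
  moreover have "qint (n - 1) (e ^ n * q) = ((1 - q) / (1 - e * q)) ^ of_bool (odd n) * qint (n - 1) q"
    by (rule qint_twisted[OF e eq]) (use n in auto)
  moreover have "nat \<lceil>real n / 2\<rceil> = n div 2 + of_bool (odd n)"
    unfolding nat_ceiling_half by (cases "even n") (auto elim!: evenE oddE)
  ultimately show ?thesis
    by (simp add: power_add mult_ac)
qed

theorem proposition5p2:
  fixes \<epsilon> q :: real and n :: nat
  assumes "\<epsilon> = 1 \<or> \<epsilon> = -1" and "n \<ge> 2"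
  shows "(\<Sum>\<gamma>\<in>Delta_lt n. \<epsilon> ^ lengthB \<gamma> * q ^ fmaj \<gamma>)
           = \<epsilon> ^ n * q * (\<Prod>i=1..n-1. qint (2*i) (\<epsilon> ^ i * q)) * qint (n - 1) (\<epsilon> ^ n * q)
       \<and> (\<epsilon> * q \<noteq> 1 \<longrightarrow>
         \<epsilon> ^ n * q * (\<Prod>i=1..n-1. qint (2*i) (\<epsilon> ^ i * q)) * qint (n - 1) (\<epsilon> ^ n * q)
           = \<epsilon> ^ n * q * ((1 - q) / (1 - \<epsilon> * q)) ^ nat \<lceil>real n / 2\<rceil>
             * (\<Prod>i=1..n-1. qint (2*i) q) * qint (n - 1) q)"
proof (intro conjI impI)
  have "\<epsilon> ^ 2 = 1"
    using assms(1) by auto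
  then show "(\<Sum>\<gamma>\<in>Delta_lt n. \<epsilon> ^ lengthB \<gamma> * q ^ fmaj \<gamma>)
      = \<epsilon> ^ n * q * (\<Prod>i=1..n-1. qint (2*i) (\<epsilon> ^ i * q)) * qint (n - 1) (\<epsilon> ^ n * q)"
    using sum_Delta_lt assms(2) by blast
next
  assume "\<epsilon> * q \<noteq> 1"
  then show "\<epsilon> ^ n * q * (\<Prod>i=1..n-1. qint (2*i) (\<epsilon> ^ i * q)) * qint (n - 1) (\<epsilon> ^ n * q)
      = \<epsilon> ^ n * q * ((1 - q) / (1 - \<epsilon> * q)) ^ nat \<lceil>real n / 2\<rceil>
        * (\<Prod>i=1..n-1. qint (2*i) q) * qint (n - 1) q"
    using twisted_product_eq assms by blast
qed

end
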